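(* Let $d\ge1$, $k\ge0$ be integers, let $u_0\in L^1(\mathbb{R}^d;1+|x|^{k+1})$, and let $u(x,t)=\int_{\mathbb{R}^d}G(x-y,t)u_0(y)\,dy$ be the solution of the heat equation $u_t=\Delta u$ on $\mathbb{R}^d\times(0,\infty)$ with $u(\cdot,0)=u_0$. Then for all $x\in\mathbb{R}^d$ and $t>0$, $$\Big|u(x,t)-\pi^{-d/2}e^{-\frac{|x|^2}{4t}}\sum_{|\alpha|\le k}\frac{\int y^\alpha u_0(y)\,dy}{\alpha!}(4t)^{-\frac{|\alpha|+d}{2}}\prod_{i=1}^d H_{\alpha_i}\Big(\frac{x_i}{2\sqrt t}\Big)\Big| \le (2\pi)^{-\frac d2}(2t)^{-\frac{k+d+1}{2}}\sum_{|\alpha|=k+1}\frac{\|y^\alpha u_0(y)\|_{L^1}}{\sqrt{\alpha!}}\Big(\prod_{i=1}^d(\alpha_i+1)\Big)^{-\frac1{12}}.$$ The sum subtracted on the left equals $u_k(x,t):=\sum_{|\alpha|\le k}\frac{(-1)^{|\alpha|}}{\alpha!}\big(\int y^\alpha u_0(y)\,dy\big)D^\alpha G(x,t)$.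
   Context: $G(x,t)=(4\pi t)^{-d/2}\exp(-|x|^2/(4t))$ is the heat kernel. $H_n(x)=(-1)^ne^{x^2}\frac{d^n}{dx^n}e^{-x^2}$ are the physicists' Hermite polynomials. $L^1(\mathbb{R}^d;1+|x|^{m})$ denotes the set of measurable functions $f$ with $\int|f(x)|(1+|x|^m)\,dx<\infty$. Multi-index notation: $\alpha=(\alpha_1,\dots,\alpha_d)\in\mathbb{Z}_{\ge0}^d$, $|\alpha|=\sum\alpha_i$, $\alpha!=\prod\alpha_i!$, $y^\alpha=\prod y_i^{\alpha_i}$, $D^\alpha=\partial_{x_1}^{\alpha_1}\cdots\partial_{x_d}^{\alpha_d}$. *)

theory Defs
  imports "HOL-Analysis.Analysis"
begin

definition heat_kernel :: "real^'n \<Rightarrow> real \<Rightarrow> real" where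
  "heat_kernel x t = (4 * pi * t) powr (- (real CARD('n) / 2)) * exp (- (norm x ^ 2) / (4 * t))"

definition hermite :: "nat \<Rightarrow> real \<Rightarrow> real" where
  "hermite n x = (-1) ^ n * exp (x ^ 2) * (deriv ^^ n) (\<lambda>y. exp (- (y ^ 2))) x"

definition mi_abs :: "('n::finite \<Rightarrow> nat) \<Rightarrow> nat" where
  "mi_abs \<alpha> = (\<Sum>i\<in>UNIV. \<alpha> i)"

definition mi_fact :: "('n::finite \<Rightarrow> nat) \<Rightarrow> real" where
  "mi_fact \<alpha> = (\<Prod>i\<in>UNIV. fact (\<alpha> i))"

definition mi_pow :: "real^'n \<Rightarrow> ('n \<Rightarrow> nat) \<Rightarrow> real" where
  "mi_pow y \<alpha> = (\<Prod>i\<in>UNIV. (y $ i) ^ (\<alpha> i))"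

definition heat_solution :: "(real^'n \<Rightarrow> real) \<Rightarrow> real^'n \<Rightarrow> real \<Rightarrow> real" where
  "heat_solution u0 x t = (\<integral>y. heat_kernel (x - y) t * u0 y \<partial>lebesgue)"

end

theory Submission
  imports Defs
begin

text \<open>
  Since \<open>G(x - y, t) = \<Prod>\<^sub>i g\<^sub>t(x\<^sub>i - y\<^sub>i)\<close> with the one-dimensional kernel \<open>g\<^sub>t\<close>, the
  solution is \<open>u(x,t) = \<integral> G(x - y, t) u\<^sub>0(y) dy\<close>, and we expand the integrand in \<open>y\<close>: a joint
  Taylor expansion of the product to total order \<open>k\<close> has as terms exactly the Hermite
  expressions of the theorem times the monomials \<open>y\<^sup>\<alpha>\<close>, and its remainder is bounded by the
  monomials of order \<open>k+1\<close> weighted by uniform bounds on the derivatives of \<open>g\<^sub>t\<close>.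
  Integrating the pointwise estimate against \<open>u\<^sub>0\<close> gives the theorem.
\<close>

text \<open>\<open>\<phi>\<^sub>n\<close> is the \<open>n\<close>-th derivative of \<open>e\<^sup>-\<^sup>z\<^sup>2\<close>; the Hermite polynomials of the theorem enter only
  through it.\<close>

definition gauss_deriv :: "nat \<Rightarrow> real \<Rightarrow> real" where
  "gauss_deriv n = (deriv ^^ n) (\<lambda>z. exp (- (z ^ 2)))"

lemma gauss_deriv_0: "gauss_deriv 0 = (\<lambda>z. exp (- (z ^ 2)))"
  by (simp add: gauss_deriv_def)

lemma gauss_deriv_Suc: "gauss_deriv (Suc n) = deriv (gauss_deriv n)"
  by (simp add: gauss_deriv_def)

lemma gauss_deriv_1: "gauss_deriv 1 = (\<lambda>z. -2 * z * exp (- (z ^ 2)))"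
proof -
  have "(gauss_deriv 0 has_real_derivative -2 * z * exp (- (z ^ 2))) (at z)" for z
    unfolding gauss_deriv_0 by (auto intro!: derivative_eq_intros)
  then show ?thesis
    using gauss_deriv_Suc[of 0] by (auto intro!: ext DERIV_imp_deriv)
qed

lemma gauss_deriv_2: "gauss_deriv 2 = (\<lambda>z. (4 * z^2 - 2) * exp (- (z ^ 2)))"
proof -
  have "(gauss_deriv 1 has_real_derivative (4 * z^2 - 2) * exp (- (z ^ 2))) (at z)" for z
    unfolding gauss_deriv_1
    by (auto intro!: derivative_eq_intros simp: algebra_simps power2_eq_square)
  then show ?thesis
    using gauss_deriv_Suc[of 1] by (auto simp: numeral_2_eq_2 intro!: ext DERIV_imp_deriv)
qed

text \<open>Each iterated derivative is genuinely differentiable, and the three-term recurrence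
  \<open>\<phi>\<^sub>n\<^sub>+\<^sub>2(z) = -2z \<phi>\<^sub>n\<^sub>+\<^sub>1(z) - 2(n+1) \<phi>\<^sub>n(z)\<close> holds; both facts are proved simultaneously,
  since differentiating the recurrence gives the next derivative.\<close>

lemma gauss_deriv_step:
  "(\<forall>z. (gauss_deriv n has_real_derivative gauss_deriv (Suc n) z) (at z)) \<and>
   (\<forall>z. (gauss_deriv (Suc n) has_real_derivative gauss_deriv (Suc (Suc n)) z) (at z)) \<and>
   (\<forall>z. gauss_deriv (Suc (Suc n)) z = -2 * z * gauss_deriv (Suc n) z - 2 * (n + 1) * gauss_deriv n z)"
proof (induction n)
  case 0
  have "(gauss_deriv 0 has_real_derivative gauss_deriv 1 z) (at z)" for z
    unfolding gauss_deriv_0 gauss_deriv_1 by (auto intro!: derivative_eq_intros)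
  moreover have "(gauss_deriv 1 has_real_derivative gauss_deriv 2 z) (at z)" for z
    unfolding gauss_deriv_1 gauss_deriv_2
    by (auto intro!: derivative_eq_intros simp: algebra_simps power2_eq_square)
  ultimately show ?case
    using gauss_deriv_1 gauss_deriv_2
    by (auto simp: gauss_deriv_0 numeral_2_eq_2 algebra_simps power2_eq_square)
next
  case (Suc n)
  then have D0: "\<And>z. (gauss_deriv n has_real_derivative gauss_deriv (Suc n) z) (at z)"
    and D1: "\<And>z. (gauss_deriv (Suc n) has_real_derivative gauss_deriv (Suc (Suc n)) z) (at z)"
    and rec: "gauss_deriv (Suc (Suc n)) = (\<lambda>z. -2 * z * gauss_deriv (Suc n) z - 2 * (n + 1) * gauss_deriv n z)"
    by auto
  have D2: "(gauss_deriv (Suc (Suc n)) has_real_derivative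
      -2 * gauss_deriv (Suc n) z - 2 * z * gauss_deriv (Suc (Suc n)) z - 2 * (n + 1) * gauss_deriv (Suc n) z) (at z)" for z
    unfolding rec by (rule derivative_eq_intros D1 D0 refl)+ (simp add: algebra_simps rec)
  then have next_eq: "gauss_deriv (Suc (Suc (Suc n))) z =
      -2 * gauss_deriv (Suc n) z - 2 * z * gauss_deriv (Suc (Suc n)) z - 2 * (n + 1) * gauss_deriv (Suc n) z" for z
    by (simp add: gauss_deriv_Suc[of "Suc (Suc n)"] DERIV_imp_deriv)
  show ?case
    using D1 D2 by (auto simp: next_eq algebra_simps)
qed

lemma gauss_deriv_has_deriv: "(gauss_deriv n has_real_derivative gauss_deriv (Suc n) z) (at z)"
  using gauss_deriv_step by blast

lemma gauss_deriv_rec: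
  "gauss_deriv (Suc (Suc n)) z = -2 * z * gauss_deriv (Suc n) z - 2 * (n + 1) * gauss_deriv n z"
  using gauss_deriv_step by blast

lemma gauss_deriv_hermite: "gauss_deriv n z = (-1) ^ n * exp (- (z ^ 2)) * hermite n z"
proof -
  have "hermite n z = (-1) ^ n * exp (z ^ 2) * gauss_deriv n z"
    unfolding hermite_def gauss_deriv_def ..
  moreover have "(-1::real) ^ n * (-1) ^ n = 1" "exp (- (z ^ 2)) * exp (z ^ 2) = 1"
    by (simp_all add: exp_minus field_simps flip: power_add)
  ultimately show ?thesis by (simp add: algebra_simps)
qed

text \<open>Energy method: \<open>E(z) = \<phi>\<^sub>n(z)\<^sup>2 + \<phi>\<^sub>n\<^sub>+\<^sub>1(z)\<^sup>2/(2n+2)\<close> has derivative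
  \<open>-4z \<phi>\<^sub>n\<^sub>+\<^sub>1(z)\<^sup>2/(2n+2)\<close> by the recurrence, so it is maximal at \<open>z = 0\<close>.\<close>

lemma gauss_energy_le:
  "(gauss_deriv n z)^2 \<le> (gauss_deriv n 0)^2 + (gauss_deriv (Suc n) 0)^2 / (2 * real n + 2)"
proof -
  define E where "E = (\<lambda>z. gauss_deriv n z * gauss_deriv n z +
      gauss_deriv (Suc n) z * gauss_deriv (Suc n) z / (2 * real n + 2))"
  define E' where "E' = (\<lambda>z. -4 * z * (gauss_deriv (Suc n) z * gauss_deriv (Suc n) z) / (2 * real n + 2))"
  have D: "(E has_real_derivative E' z) (at z)" for z
  proof -
    have "(E has_real_derivative
        gauss_deriv (Suc n) z * gauss_deriv n z + gauss_deriv (Suc n) z * gauss_deriv n z +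
        (gauss_deriv (Suc (Suc n)) z * gauss_deriv (Suc n) z +
         gauss_deriv (Suc (Suc n)) z * gauss_deriv (Suc n) z) / (2 * real n + 2)) (at z)"
      unfolding E_def by (intro DERIV_add DERIV_mult DERIV_cdivide gauss_deriv_has_deriv)
    then show ?thesis
      unfolding E'_def gauss_deriv_rec by (simp add: field_simps)
  qed
  have "E z \<le> E 0"
  proof (cases "z \<ge> 0")
    case True
    show ?thesis
    proof (rule DERIV_nonpos_imp_nonincreasing[OF True])
      fix x :: real assume "0 \<le> x"
      then have "E' x \<le> 0" unfolding E'_def by (auto intro!: divide_nonpos_pos mult_nonpos_nonneg)
      then show "\<exists>y. DERIV E x :> y \<and> y \<le> 0" using D by blast
    qed
  next
    case False
    show ?thesis
    proof (rule DERIV_nonneg_imp_nondecreasing[of z 0])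
      show "z \<le> 0" using False by simp
      fix x :: real assume "x \<le> 0"
      then have "x * (gauss_deriv (Suc n) x * gauss_deriv (Suc n) x) \<le> 0"
        by (intro mult_nonpos_nonneg) auto
      then have "E' x \<ge> 0" unfolding E'_def by (auto simp: divide_nonpos_pos)
      then show "\<exists>y. DERIV E x :> y \<and> y \<ge> 0" using D by blast
    qed
  qed
  moreover have "(gauss_deriv n z)^2 \<le> E z" unfolding E_def by (simp add: power2_eq_square)
  ultimately show ?thesis unfolding E_def power2_eq_square by linarith
qed

lemma gauss_deriv_odd_0: "gauss_deriv (2 * m + 1) 0 = 0"
proof (induction m)
  case 0
  show ?case using gauss_deriv_1 by simp
next
  case (Suc m)
  have "gauss_deriv (2 * Suc m + 1) 0 = gauss_deriv (Suc (Suc (2 * m + 1))) 0" by simp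
  also have "\<dots> = 0" unfolding gauss_deriv_rec using Suc by simp
  finally show ?case .
qed

lemma gauss_deriv_even_0:
  "(gauss_deriv (2 * m + 2) 0)^2 = (4 * real m + 2)^2 * (gauss_deriv (2 * m) 0)^2"
proof -
  have "gauss_deriv (2 * m + 2) 0 = gauss_deriv (Suc (Suc (2 * m))) 0" by simp
  also have "\<dots> = -(4 * real m + 2) * gauss_deriv (2 * m) 0"
    unfolding gauss_deriv_rec by (simp add: algebra_simps)
  finally have "(gauss_deriv (2 * m + 2) 0)^2 = (-(4 * real m + 2))^2 * (gauss_deriv (2 * m) 0)^2"
    by (simp only: power_mult_distrib)
  then show ?thesis by (simp only: power2_minus)
qed

text \<open>The elementary inequality \<open>(2m+1)\<^sup>5 (2m+3) \<le> (2m+2)\<^sup>6\<close>, i.e.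
  \<open>(u-1)\<^sup>5(u+1) \<le> u\<^sup>6\<close>, which drives the induction below.\<close>

lemma odd_power_ineq: "(2 * real m + 1)^5 * (2 * real m + 3) \<le> (2 * real m + 2)^6"
proof -
  define u where "u = 2 * real m + 2"
  have u: "u \<ge> 1" unfolding u_def by simp
  have shift: "2 * real m + 1 = u - 1" "2 * real m + 3 = u + 1" unfolding u_def by simp_all
  have "(2 * real m + 1)^5 * (2 * real m + 3) = (u - 1)^4 * ((u - 1) * (u + 1))"
    unfolding shift by (simp add: eval_nat_numeral)
  also have "\<dots> \<le> u^4 * u^2"
  proof (rule mult_mono)
    show "(u - 1)^4 \<le> u^4" using u by (intro power_mono) auto
    show "(u - 1) * (u + 1) \<le> u^2" by (simp add: power2_eq_square algebra_simps)
  qed (use u in auto)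
  also have "\<dots> = (2 * real m + 2)^6" unfolding u_def by (simp flip: power_add)
  finally show ?thesis .
qed

lemma gauss_deriv_even_0_bound:
  "((gauss_deriv (2 * m) 0)^2)^6 * (2 * real m + 1) \<le> (2^(2 * m) * fact (2 * m))^6"
proof (induction m)
  case 0
  show ?case by (simp add: gauss_deriv_0)
next
  case (Suc m)
  define A where "A = ((gauss_deriv (2 * m) 0)^2)^6"
  define R where "R = (2^(2 * m) * fact (2 * m) :: real)^6"
  define p where "p = 2 * real m + 1"
  have IH: "p * A \<le> R" using Suc unfolding A_def R_def p_def by (simp add: mult.commute)
  have A0: "A \<ge> 0" unfolding A_def by simp
  have p1: "p \<ge> 1" unfolding p_def by simp
  have lhs: "((gauss_deriv (2 * Suc m) 0)^2)^6 = 4^6 * p^12 * A"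
  proof -
    have "((gauss_deriv (2 * Suc m) 0)^2)^6 = ((4 * real m + 2)^2)^6 * A"
      using gauss_deriv_even_0[of m] unfolding A_def by (simp add: power_mult_distrib)
    also have "4 * real m + 2 = 2 * p" unfolding p_def by simp
    finally show ?thesis by (simp add: power_mult_distrib flip: power_mult)
  qed
  have rhs: "(2^(2 * Suc m) * fact (2 * Suc m) :: real)^6 = 4^6 * p^6 * (p + 1)^6 * R"
  proof -
    have "fact (2 * Suc m) = (p + 1) * p * (fact (2 * m) :: real)"
      unfolding p_def by (simp add: fact_Suc algebra_simps)
    moreover have "(2::real)^(2 * Suc m) = 4 * 2^(2 * m)" by (simp add: power_mult)
    ultimately have "(2^(2 * Suc m) * fact (2 * Suc m) :: real) = (4 * p * (p + 1)) * (2^(2 * m) * fact (2 * m))"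
      by simp
    then show ?thesis unfolding R_def by (simp only: power_mult_distrib)
  qed
  have step: "p^5 * (p + 2) * (p * A) \<le> (p + 1)^6 * R"
  proof (rule mult_mono)
    show "p^5 * (p + 2) \<le> (p + 1)^6"
      using odd_power_ineq[of m] unfolding p_def by (simp add: add.assoc)
  qed (use IH A0 p1 in auto)
  have "4^6 * p^12 * A * (2 * real (Suc m) + 1) = (4^6 * p^6) * (p^5 * (p + 2) * (p * A))"
  proof -
    have "p^12 = p^6 * p^5 * p" by (simp flip: power_add power_Suc2)
    moreover have "2 * real (Suc m) + 1 = p + 2" unfolding p_def by simp
    ultimately show ?thesis by (simp only: mult_ac)
  qed
  also have "\<dots> \<le> (4^6 * p^6) * ((p + 1)^6 * R)"
    using step by (intro mult_left_mono) auto
  also have "\<dots> = 4^6 * p^6 * (p + 1)^6 * R" by (simp only: mult.assoc)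
  finally show ?case unfolding lhs rhs .
qed

lemma le_mult_root6:
  fixes x y c :: real
  assumes x0: "x \<ge> 0" and y0: "y \<ge> 0" and c1: "c \<ge> 1" and le: "x^6 * c \<le> y^6"
  shows "x \<le> y * c powr (-1/6)"
proof -
  define w where "w = c powr (-1/6)"
  have w0: "w \<ge> 0" unfolding w_def by simp
  have "w^6 = (c powr (-1/6)) powr 6" unfolding w_def using c1 by (simp add: powr_realpow)
  also have "\<dots> = c powr (-1)" by (simp add: powr_powr)
  also have "\<dots> = 1 / c" using c1 by (simp add: powr_minus divide_inverse)
  finally have w6: "w^6 = 1 / c" .
  have "x^6 \<le> y^6 / c" using le c1 by (simp add: pos_le_divide_eq)
  also have "\<dots> = (y * w)^6" by (simp add: power_mult_distrib w6)
  finally have "x^6 \<le> (y * w)^6" .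
  then have "x \<le> y * w" using power_mono_iff[of x "y * w" 6] x0 y0 w0 by simp
  then show ?thesis unfolding w_def .
qed

lemma gauss_energy_0_bound:
  "((gauss_deriv n 0)^2 + (gauss_deriv (Suc n) 0)^2 / (2 * real n + 2))^6 * (real n + 1)
     \<le> (2^n * fact n)^6"
proof (cases "even n")
  case True
  then obtain m where n: "n = 2 * m" by blast
  have "gauss_deriv (Suc n) 0 = 0" using gauss_deriv_odd_0[of m] n by simp
  then have "((gauss_deriv n 0)^2 + (gauss_deriv (Suc n) 0)^2 / (2 * real n + 2))^6 * (real n + 1)
      = ((gauss_deriv (2 * m) 0)^2)^6 * (2 * real m + 1)"
    using n by simp
  also have "\<dots> \<le> (2^(2 * m) * fact (2 * m))^6" by (rule gauss_deriv_even_0_bound)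
  finally show ?thesis using n by simp
next
  case False
  then obtain m where n: "n = 2 * m + 1" using oddE by blast
  define A where "A = (gauss_deriv (2 * (m + 1)) 0)^2"
  define q where "q = 2 * (2 * real m + 2)"
  have q0: "q > 0" unfolding q_def by simp
  have energy: "(gauss_deriv n 0)^2 + (gauss_deriv (Suc n) 0)^2 / (2 * real n + 2) = A / q"
  proof -
    have "Suc n = 2 * (m + 1)" "2 * real n + 2 = q" unfolding q_def n by simp_all
    then show ?thesis using gauss_deriv_odd_0[of m] n unfolding A_def by simp
  qed
  have fact_eq: "(2^(2 * (m + 1)) * fact (2 * (m + 1)) :: real) = q * (2^n * fact n)"
  proof -
    have "fact (2 * (m + 1)) = (2 * real m + 2) * (fact n :: real)" unfolding n by (simp add: fact_Suc)
    moreover have "(2::real)^(2 * (m + 1)) = 2 * 2^n" unfolding n by simp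
    ultimately show ?thesis unfolding q_def by simp
  qed
  have "(A / q)^6 * (real n + 1) \<le> (A / q)^6 * (2 * real (m + 1) + 1)"
    using n by (intro mult_left_mono) auto
  also have "\<dots> = A^6 * (2 * real (m + 1) + 1) / q^6" by (simp add: power_divide)
  also have "\<dots> \<le> (q * (2^n * fact n))^6 / q^6"
    using gauss_deriv_even_0_bound[of "m + 1"] unfolding A_def fact_eq by (intro divide_right_mono) auto
  also have "\<dots> = (2^n * fact n)^6" using q0 by (simp add: power_mult_distrib)
  finally show ?thesis unfolding energy .
qed

lemma gauss_deriv_bound: "\<bar>gauss_deriv n z\<bar> \<le> sqrt (2^n * fact n) * (real n + 1) powr (-1/12)"
proof -
  define E0 where "E0 = (gauss_deriv n 0)^2 + (gauss_deriv (Suc n) 0)^2 / (2 * real n + 2)"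
  have "E0 \<le> 2^n * fact n * (real n + 1) powr (-1/6)"
    using gauss_energy_0_bound[of n] unfolding E0_def by (intro le_mult_root6) auto
  then have "(gauss_deriv n z)^2 \<le> 2^n * fact n * (real n + 1) powr (-1/6)"
    using gauss_energy_le[of n z] unfolding E0_def by linarith
  then have "\<bar>gauss_deriv n z\<bar> \<le> sqrt (2^n * fact n * (real n + 1) powr (-1/6))"
    using real_sqrt_le_mono by (metis real_sqrt_abs)
  also have "\<dots> = sqrt (2^n * fact n) * sqrt ((real n + 1) powr (-1/6))"
    by (rule real_sqrt_mult)
  also have "sqrt ((real n + 1) powr (-1/6)) = (real n + 1) powr (-1/12)"
    using powr_half_sqrt_powr[of "real n + 1" "-1/6"] by simp
  finally show ?thesis .
qed

definition multi_indices :: "'a set \<Rightarrow> (nat \<Rightarrow> bool) \<Rightarrow> ('a \<Rightarrow> nat) set" where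
  "multi_indices I P = {\<alpha>. (\<forall>i. i \<notin> I \<longrightarrow> \<alpha> i = 0) \<and> P (sum \<alpha> I)}"

lemma finite_multi_indices:
  assumes "finite I" "\<And>v. P v \<Longrightarrow> v \<le> N"
  shows "finite (multi_indices I P)"
proof (rule finite_subset)
  show "multi_indices I P \<subseteq> {f. \<forall>x. (x \<in> I \<longrightarrow> f x \<in> {..N}) \<and> (x \<notin> I \<longrightarrow> f x = 0)}"
  proof
    fix \<alpha> assume \<alpha>: "\<alpha> \<in> multi_indices I P"
    then have "sum \<alpha> I \<le> N" using assms(2) unfolding multi_indices_def by auto
    moreover have "\<alpha> x \<le> sum \<alpha> I" if "x \<in> I" for x
      using that assms(1) by (intro member_le_sum) auto
    ultimately show "\<alpha> \<in> {f. \<forall>x. (x \<in> I \<longrightarrow> f x \<in> {..N}) \<and> (x \<notin> I \<longrightarrow> f x = 0)}"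
      using \<alpha> unfolding multi_indices_def by force
  qed
  show "finite {f. \<forall>x. (x \<in> I \<longrightarrow> f x \<in> {..N}) \<and> (x \<notin> I \<longrightarrow> f x = (0::nat))}"
    using assms(1) by (intro finite_set_of_finite_funs) auto
qed

lemma multi_indices_empty: "multi_indices {} P = (if P 0 then {\<lambda>_. 0} else {})"
  unfolding multi_indices_def by (auto intro!: ext)

lemma multi_indices_order_0: "finite J \<Longrightarrow> multi_indices J (\<lambda>v. v = 0) = {\<lambda>_. 0}"
  unfolding multi_indices_def by (auto intro!: ext simp: sum_eq_0_iff)

lemma multi_indices_cong: "(\<And>v. P v \<longleftrightarrow> Q v) \<Longrightarrow> multi_indices J P = multi_indices J Q"
  unfolding multi_indices_def by auto

lemma sum_multi_indices_insert:
  fixes h :: "('a \<Rightarrow> nat) \<Rightarrow> 'b::comm_monoid_add"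
  assumes J: "finite J" "j \<notin> J" and bounded: "\<And>v. P v \<Longrightarrow> v \<le> N"
  shows "(\<Sum>\<alpha>\<in>multi_indices (insert j J) P. h \<alpha>)
       = (\<Sum>a\<le>N. \<Sum>\<beta>\<in>multi_indices J (\<lambda>s. P (a + s)). h (\<beta>(j := a)))"
proof -
  have fin: "finite (multi_indices J (\<lambda>s. P (a + s)))" for a
    using bounded by (intro finite_multi_indices[OF J(1), of _ N]) (metis add_leD2)
  have "(\<Sum>a\<le>N. \<Sum>\<beta>\<in>multi_indices J (\<lambda>s. P (a + s)). h (\<beta>(j := a)))
      = (\<Sum>p\<in>Sigma {..N} (\<lambda>a. multi_indices J (\<lambda>s. P (a + s))). h ((snd p)(j := fst p)))"
    by (subst sum.Sigma) (auto simp: fin split_beta)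
  also have "\<dots> = (\<Sum>\<alpha>\<in>multi_indices (insert j J) P. h \<alpha>)"
  proof (rule sum.reindex_bij_witness[where i="\<lambda>\<alpha>. (\<alpha> j, \<alpha>(j := 0))" and j="\<lambda>p. (snd p)(j := fst p)"])
    fix p assume "p \<in> Sigma {..N} (\<lambda>a. multi_indices J (\<lambda>s. P (a + s)))"
    then have supp: "\<forall>i. i \<notin> J \<longrightarrow> snd p i = 0" and ord: "P (fst p + sum (snd p) J)"
      unfolding multi_indices_def by auto
    show "(((snd p)(j := fst p)) j, ((snd p)(j := fst p))(j := 0)) = p"
      using supp J by (cases p) (auto intro!: ext)
    have "sum ((snd p)(j := fst p)) J = sum (snd p) J" using J(2) by (intro sum.cong) auto
    then have "sum ((snd p)(j := fst p)) (insert j J) = fst p + sum (snd p) J" using J by simp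
    then show "(snd p)(j := fst p) \<in> multi_indices (insert j J) P"
      using supp ord unfolding multi_indices_def by auto
  next
    fix \<alpha> assume "\<alpha> \<in> multi_indices (insert j J) P"
    then have supp: "\<forall>i. i \<notin> insert j J \<longrightarrow> \<alpha> i = 0" and ord: "P (sum \<alpha> (insert j J))"
      unfolding multi_indices_def by auto
    have "sum (\<alpha>(j := 0)) J = sum \<alpha> J" using J(2) by (intro sum.cong) auto
    then have "sum \<alpha> (insert j J) = \<alpha> j + sum (\<alpha>(j := 0)) J" using J by simp
    then show "(\<alpha> j, \<alpha>(j := 0)) \<in> Sigma {..N} (\<lambda>a. multi_indices J (\<lambda>s. P (a + s)))"
      using supp ord bounded[OF ord] unfolding multi_indices_def by auto
  qed auto
  finally show ?thesis by simp
qed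

lemma sum_prod_multi_indices_insert:
  fixes h :: "'a \<Rightarrow> nat \<Rightarrow> 'b::comm_semiring_1"
  assumes J: "finite J" "j \<notin> J" and bounded: "\<And>v. P v \<Longrightarrow> v \<le> N"
  shows "(\<Sum>\<alpha>\<in>multi_indices (insert j J) P. \<Prod>i\<in>insert j J. h i (\<alpha> i))
       = (\<Sum>a\<le>N. h j a * (\<Sum>\<beta>\<in>multi_indices J (\<lambda>s. P (a + s)). \<Prod>i\<in>J. h i (\<beta> i)))"
proof -
  have prod_upd: "(\<Prod>i\<in>insert j J. h i ((\<beta>(j := a)) i)) = h j a * (\<Prod>i\<in>J. h i (\<beta> i))" for \<beta> a
  proof -
    have "(\<Prod>i\<in>J. h i ((\<beta>(j := a)) i)) = (\<Prod>i\<in>J. h i (\<beta> i))"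
      using J(2) by (intro prod.cong) auto
    then show ?thesis using J by simp
  qed
  have "(\<Sum>\<alpha>\<in>multi_indices (insert j J) P. \<Prod>i\<in>insert j J. h i (\<alpha> i))
      = (\<Sum>a\<le>N. \<Sum>\<beta>\<in>multi_indices J (\<lambda>s. P (a + s)). \<Prod>i\<in>insert j J. h i ((\<beta>(j := a)) i))"
    by (rule sum_multi_indices_insert[OF J bounded])
  then show ?thesis unfolding prod_upd sum_distrib_left .
qed

lemma taylor_uniform_bound:
  fixes F :: "nat \<Rightarrow> real \<Rightarrow> real"
  assumes D: "\<And>j s. (F j has_real_derivative F (Suc j) s) (at s)"
    and bound: "\<And>j s. \<bar>F j s\<bar> \<le> B j"
  shows "\<bar>F 0 (a + b) - (\<Sum>m\<le>k. b^m / fact m * F m a)\<bar> \<le> \<bar>b\<bar>^(k+1) / fact (k+1) * B (k+1)"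
proof -
  have "((\<lambda>s. F m (a + s)) has_real_derivative F (Suc m) (a + x) * 1) (at x)" for m x
    by (rule DERIV_chain2[OF D]) (auto intro!: derivative_eq_intros)
  then have "\<forall>m x. ((\<lambda>s. F m (a + s)) has_real_derivative F (Suc m) (a + x)) (at x)"
    by simp
  then obtain \<tau> where "F 0 (a + b) = (\<Sum>m<Suc k. (F m (a + 0) / fact m) * b ^ m)
      + (F (Suc k) (a + \<tau>) / fact (Suc k)) * b ^ Suc k"
    using Maclaurin_all_le[of "\<lambda>m s. F m (a + s)" "\<lambda>s. F 0 (a + s)" b "Suc k"] by blast
  then have "\<bar>F 0 (a + b) - (\<Sum>m\<le>k. b^m / fact m * F m a)\<bar> = \<bar>F (Suc k) (a + \<tau>)\<bar> * (\<bar>b\<bar>^(k+1) / fact (k+1))"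
    by (simp add: lessThan_Suc_atMost mult.commute abs_mult power_abs)
  also have "\<dots> \<le> B (k+1) * (\<bar>b\<bar>^(k+1) / fact (k+1))"
    using bound[of "Suc k" "a + \<tau>"] by (intro mult_right_mono) auto
  finally show ?thesis by (simp add: mult.commute)
qed

lemma cauchy_product_error:
  fixes f g :: real and a c T R :: "nat \<Rightarrow> real"
  assumes f: "\<bar>f - (\<Sum>m\<le>k. a m)\<bar> \<le> c (k+1)"
    and g: "\<And>n. \<bar>g - T n\<bar> \<le> R (n+1)" and g0: "\<bar>g\<bar> \<le> R 0"
    and a: "\<And>m. \<bar>a m\<bar> \<le> c m"
  shows "\<bar>f * g - (\<Sum>m\<le>k. a m * T (k-m))\<bar> \<le> (\<Sum>m\<le>k+1. c m * R (k+1-m))"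
proof -
  have "f * g - (\<Sum>m\<le>k. a m * T (k-m)) = (f - (\<Sum>m\<le>k. a m)) * g + (\<Sum>m\<le>k. a m * (g - T (k-m)))"
    by (simp add: algebra_simps sum_subtractf sum_distrib_left sum_distrib_right)
  also have "\<bar>\<dots>\<bar> \<le> \<bar>f - (\<Sum>m\<le>k. a m)\<bar> * \<bar>g\<bar> + (\<Sum>m\<le>k. \<bar>a m\<bar> * \<bar>g - T (k-m)\<bar>)"
    by (rule order_trans[OF abs_triangle_ineq])
       (auto simp: abs_mult intro!: order_trans[OF sum_abs] sum_mono)
  also have "\<dots> \<le> c (k+1) * R 0 + (\<Sum>m\<le>k. c m * R (k-m+1))"
    using f g g0 a by (intro add_mono mult_mono sum_mono) (auto intro: order_trans[OF abs_ge_zero])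
  also have "\<dots> = (\<Sum>m\<le>k+1. c m * R (k+1-m))"
    by (simp add: Suc_diff_le add.commute)
  finally show ?thesis .
qed

lemma taylor_product_bound:
  fixes F :: "'a \<Rightarrow> nat \<Rightarrow> real \<Rightarrow> real" and B :: "'a \<Rightarrow> nat \<Rightarrow> real"
  assumes D: "\<And>i j s. (F i j has_real_derivative F i (Suc j) s) (at s)"
    and bound: "\<And>i j s. \<bar>F i j s\<bar> \<le> B i j"
    and "finite I"
  shows "\<bar>(\<Prod>i\<in>I. F i 0 (a i + b i)) -
     (\<Sum>\<alpha>\<in>multi_indices I (\<lambda>v. v \<le> k). \<Prod>i\<in>I. b i ^ \<alpha> i / fact (\<alpha> i) * F i (\<alpha> i) (a i))\<bar>
   \<le> (\<Sum>\<alpha>\<in>multi_indices I (\<lambda>v. v = k+1). \<Prod>i\<in>I. \<bar>b i\<bar> ^ \<alpha> i / fact (\<alpha> i) * B i (\<alpha> i))"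
  using \<open>finite I\<close>
proof (induction I arbitrary: k rule: finite_induct)
  case empty
  show ?case by (simp add: multi_indices_empty)
next
  case (insert j J)
  define approx where "approx = (\<lambda>i m. b i ^ m / fact m * F i m (a i))"
  define err where "err = (\<lambda>i m. \<bar>b i\<bar> ^ m / fact m * B i m)"
  define T where "T = (\<lambda>n. \<Sum>\<alpha>\<in>multi_indices J (\<lambda>v. v \<le> n). \<Prod>i\<in>J. approx i (\<alpha> i))"
  define R where "R = (\<lambda>n. \<Sum>\<alpha>\<in>multi_indices J (\<lambda>v. v = n). \<Prod>i\<in>J. err i (\<alpha> i))"
  have T_insert: "(\<Sum>\<alpha>\<in>multi_indices (insert j J) (\<lambda>v. v \<le> k). \<Prod>i\<in>insert j J. approx i (\<alpha> i))
      = (\<Sum>m\<le>k. approx j m * T (k-m))"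
  proof -
    have "(\<Sum>\<alpha>\<in>multi_indices (insert j J) (\<lambda>v. v \<le> k). \<Prod>i\<in>insert j J. approx i (\<alpha> i))
        = (\<Sum>m\<le>k. approx j m * (\<Sum>\<beta>\<in>multi_indices J (\<lambda>s. m + s \<le> k). \<Prod>i\<in>J. approx i (\<beta> i)))"
      by (rule sum_prod_multi_indices_insert[OF insert.hyps]) simp
    moreover have "multi_indices J (\<lambda>s. m + s \<le> k) = multi_indices J (\<lambda>v. v \<le> k-m)" if "m \<le> k" for m
      using that by (intro multi_indices_cong) auto
    ultimately show ?thesis unfolding T_def by (auto intro!: sum.cong)
  qed
  have R_insert: "(\<Sum>\<alpha>\<in>multi_indices (insert j J) (\<lambda>v. v = k+1). \<Prod>i\<in>insert j J. err i (\<alpha> i))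
      = (\<Sum>m\<le>k+1. err j m * R (k+1-m))"
  proof -
    have "(\<Sum>\<alpha>\<in>multi_indices (insert j J) (\<lambda>v. v = k+1). \<Prod>i\<in>insert j J. err i (\<alpha> i))
        = (\<Sum>m\<le>k+1. err j m * (\<Sum>\<beta>\<in>multi_indices J (\<lambda>s. m + s = k+1). \<Prod>i\<in>J. err i (\<beta> i)))"
      by (rule sum_prod_multi_indices_insert[OF insert.hyps]) simp
    moreover have "multi_indices J (\<lambda>s. m + s = k+1) = multi_indices J (\<lambda>v. v = k+1-m)" if "m \<le> k+1" for m
      using that by (intro multi_indices_cong) auto
    ultimately show ?thesis unfolding R_def by (auto intro!: sum.cong)
  qed
  have "\<bar>F j 0 (a j + b j) * (\<Prod>i\<in>J. F i 0 (a i + b i)) - (\<Sum>m\<le>k. approx j m * T (k-m))\<bar>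
      \<le> (\<Sum>m\<le>k+1. err j m * R (k+1-m))"
  proof (rule cauchy_product_error)
    show "\<bar>F j 0 (a j + b j) - (\<Sum>m\<le>k. approx j m)\<bar> \<le> err j (k+1)"
      unfolding approx_def err_def by (rule taylor_uniform_bound) (use D bound in auto)
    show "\<bar>(\<Prod>i\<in>J. F i 0 (a i + b i)) - T n\<bar> \<le> R (n+1)" for n
      using insert.IH[of n] unfolding T_def R_def approx_def err_def .
    show "\<bar>\<Prod>i\<in>J. F i 0 (a i + b i)\<bar> \<le> R 0"
      unfolding R_def err_def multi_indices_order_0[OF insert.hyps(1)] abs_prod
      by (simp add: prod_mono bound)
    show "\<bar>approx j m\<bar> \<le> err j m" for m
      unfolding approx_def err_def using bound[of j m "a j"]
      by (auto simp: abs_mult power_abs intro!: mult_left_mono divide_right_mono)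
  qed
  then show ?case
    using insert.hyps unfolding T_insert[unfolded approx_def] R_insert[unfolded err_def] approx_def err_def
    by simp
qed

definition kernel_deriv :: "real \<Rightarrow> nat \<Rightarrow> real \<Rightarrow> real" where
  "kernel_deriv t m s = pi powr (-1/2) * (4 * t) powr (-(real m + 1) / 2) * gauss_deriv m (s / (2 * sqrt t))"

definition kernel_deriv_bound :: "real \<Rightarrow> nat \<Rightarrow> real" where
  "kernel_deriv_bound t m =
     (2 * pi) powr (-1/2) * (2 * t) powr (-(real m + 1) / 2) * (sqrt (fact m) * (real m + 1) powr (-1/12))"

text \<open>The chain-rule factor of the scaling \<open>s \<mapsto> s/(2\<surd>t)\<close>.\<close>

lemma inverse_two_sqrt:
  assumes "t > 0"
  shows "1 / (2 * sqrt t) = (4 * t) powr (-1/2)"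
proof -
  have "(4 * t) powr (-1/2) = 1 / (4 * t) powr (1/2)" by (simp add: powr_minus_divide)
  also have "(4 * t) powr (1/2) = 2 * sqrt t"
    using assms by (simp add: powr_half_sqrt real_sqrt_mult)
  finally show ?thesis by simp
qed

lemma kernel_deriv_has_deriv:
  assumes "t > 0"
  shows "(kernel_deriv t m has_real_derivative kernel_deriv t (Suc m) s) (at s)"
proof -
  have "((\<lambda>s. gauss_deriv m (s / (2 * sqrt t))) has_real_derivative
      gauss_deriv (Suc m) (s / (2 * sqrt t)) * (1 / (2 * sqrt t))) (at s)"
    by (rule DERIV_chain2[OF gauss_deriv_has_deriv]) (use DERIV_cdivide[OF DERIV_ident, of "2 * sqrt t" s] in simp)
  then have "(kernel_deriv t m has_real_derivative pi powr (-1/2) * (4 * t) powr (-(real m + 1) / 2) *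
      (gauss_deriv (Suc m) (s / (2 * sqrt t)) * (1 / (2 * sqrt t)))) (at s)"
    unfolding kernel_deriv_def by (rule DERIV_cmult)
  moreover have exponent: "(4 * t) powr (-(real m + 1) / 2) * (1 / (2 * sqrt t)) = (4 * t) powr (-(real (Suc m) + 1) / 2)"
  proof -
    have "-(real m + 1) / 2 + -1/2 = -(real (Suc m) + 1) / 2" by (simp add: field_simps)
    then show ?thesis unfolding inverse_two_sqrt[OF assms] by (metis powr_add)
  qed
  ultimately show ?thesis
    unfolding kernel_deriv_def exponent[symmetric] by (simp only: mult_ac)
qed

lemma kernel_deriv_abs_le:
  assumes t: "t > 0"
  shows "\<bar>kernel_deriv t m s\<bar> \<le> kernel_deriv_bound t m"
proof -
  have const: "pi powr (-1/2) * (4 * t) powr (-(real m + 1) / 2) * sqrt (2^m)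
      = (2 * pi) powr (-1/2) * (2 * t) powr (-(real m + 1) / 2)"
  proof -
    define e where "e = -(real m + 1) / 2"
    have sqrt_pow: "sqrt (2^m) = 2 powr (real m / 2)"
      by (simp add: powr_half_sqrt[symmetric] powr_realpow[symmetric] powr_powr)
    have split4: "(4 * t) powr e = 2 powr e * (2 * t) powr e"
      using powr_mult[of 2 "2 * t"] by simp
    have two_pows: "2 powr e * 2 powr (real m / 2) = (2::real) powr (-1/2)"
      unfolding e_def by (simp add: powr_add[symmetric] field_simps)
    have "pi powr (-1/2) * (4 * t) powr e * sqrt (2^m)
        = pi powr (-1/2) * (2 powr e * (2 * t) powr e) * 2 powr (real m / 2)"
      unfolding sqrt_pow split4 ..
    also have "\<dots> = (2 powr e * 2 powr (real m / 2)) * pi powr (-1/2) * (2 * t) powr e"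
      by (simp only: mult_ac)
    finally have "pi powr (-1/2) * (4 * t) powr e * sqrt (2^m)
        = (2 powr (-1/2) * pi powr (-1/2)) * (2 * t) powr e"
      unfolding two_pows .
    then show ?thesis unfolding e_def by (simp add: powr_mult)
  qed
  have "\<bar>kernel_deriv t m s\<bar> = pi powr (-1/2) * (4 * t) powr (-(real m + 1) / 2) * \<bar>gauss_deriv m (s / (2 * sqrt t))\<bar>"
    unfolding kernel_deriv_def by (simp add: abs_mult)
  also have "\<dots> \<le> pi powr (-1/2) * (4 * t) powr (-(real m + 1) / 2) * (sqrt (2^m) * sqrt (fact m) * (real m + 1) powr (-1/12))"
    using gauss_deriv_bound[of m] by (intro mult_left_mono) (auto simp: real_sqrt_mult)
  also have "\<dots> = kernel_deriv_bound t m"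
    unfolding kernel_deriv_bound_def const[symmetric] by (simp add: mult_ac)
  finally show ?thesis .
qed

lemma kernel_deriv_0: "t > 0 \<Longrightarrow> kernel_deriv t 0 s = (4 * pi * t) powr (-1/2) * exp (- (s^2) / (4 * t))"
  unfolding kernel_deriv_def gauss_deriv_0
  by (simp add: power_divide power_mult_distrib powr_mult mult_ac)

lemma prod_gaussians:
  fixes z :: "real^'n"
  shows "(\<Prod>i\<in>UNIV. exp (- ((z $ i)^2) / (4 * t))) = exp (- (norm z ^ 2) / (4 * t))"
proof -
  have "(\<Sum>i\<in>UNIV. - ((z $ i)^2) / (4 * t)) = - (norm z ^ 2) / (4 * t)"
    unfolding norm_vec_def L2_set_def by (simp add: sum_nonneg sum_negf sum_divide_distrib)
  then show ?thesis by (simp add: exp_sum[symmetric])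
qed

lemma heat_kernel_factorization:
  fixes z :: "real^'n"
  assumes t: "t > 0"
  shows "heat_kernel z t = (\<Prod>i\<in>UNIV. kernel_deriv t 0 (z $ i))"
proof -
  have "(\<Prod>i\<in>UNIV. kernel_deriv t 0 (z $ i))
      = (\<Prod>i\<in>(UNIV::'n set). (4 * pi * t) powr (-1/2)) * exp (- (norm z ^ 2) / (4 * t))"
    unfolding kernel_deriv_0[OF t] prod.distrib prod_gaussians ..
  also have "(\<Prod>i\<in>(UNIV::'n set). (4 * pi * t) powr (-1/2)) = (4 * pi * t) powr (\<Sum>i\<in>(UNIV::'n set). -1/2)"
    using t by (intro powr_sum[symmetric]) auto
  finally show ?thesis unfolding heat_kernel_def by simp
qed

text \<open>The coefficients of the expansion: \<open>taylor_coeff x t \<alpha> = (-1)\<^sup>|\<^sup>\<alpha>\<^sup>| D\<^sup>\<alpha>G(x,t)/\<alpha>!\<close>, written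
  through Hermite polynomials, and the weights of the order-\<open>k+1\<close> remainder.\<close>

definition taylor_coeff :: "real^'n \<Rightarrow> real \<Rightarrow> ('n \<Rightarrow> nat) \<Rightarrow> real" where
  "taylor_coeff x t \<alpha> = pi powr (- (real CARD('n) / 2)) * exp (- (norm x ^ 2) / (4 * t)) / mi_fact \<alpha> *
     (4 * t) powr (- ((real (mi_abs \<alpha>) + real CARD('n)) / 2)) *
     (\<Prod>i\<in>UNIV. hermite (\<alpha> i) (x $ i / (2 * sqrt t)))"

definition remainder_coeff :: "real \<Rightarrow> ('n::finite \<Rightarrow> nat) \<Rightarrow> real" where
  "remainder_coeff t \<alpha> = (2 * pi) powr (- (real CARD('n) / 2)) *
     (2 * t) powr (- ((real (mi_abs \<alpha>) + real CARD('n)) / 2)) / sqrt (mi_fact \<alpha>) *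
     (\<Prod>i\<in>UNIV. real (\<alpha> i) + 1) powr (- (1 / 12))"

lemma prod_normalisations:
  fixes \<alpha> :: "'n::finite \<Rightarrow> nat"
  assumes "b > 0" "c > 0"
  shows "(\<Prod>i\<in>UNIV. b powr (-1/2) * c powr (-(real (\<alpha> i) + 1) / 2))
       = b powr (- (real CARD('n) / 2)) * c powr (- ((real (mi_abs \<alpha>) + real CARD('n)) / 2))"
proof -
  have "(\<Sum>i\<in>UNIV. -(real (\<alpha> i) + 1) / 2) = (\<Sum>i\<in>UNIV. real (\<alpha> i) + 1) * (-1/2)"
    by (subst sum_distrib_right) (rule sum.cong, auto simp: field_simps)
  also have "(\<Sum>i\<in>UNIV. real (\<alpha> i) + 1) = real (mi_abs \<alpha>) + real CARD('n)"
    unfolding mi_abs_def by (simp add: sum.distrib)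
  finally have exponent: "(\<Sum>i\<in>UNIV. -(real (\<alpha> i) + 1) / 2) = - ((real (mi_abs \<alpha>) + real CARD('n)) / 2)"
    by simp
  have "(\<Prod>i\<in>(UNIV::'n set). b powr (-1/2)) = b powr (\<Sum>i\<in>(UNIV::'n set). -1/2)"
    using assms by (intro powr_sum[symmetric]) auto
  moreover have "(\<Prod>i\<in>UNIV. c powr (-(real (\<alpha> i) + 1) / 2)) = c powr (\<Sum>i\<in>UNIV. -(real (\<alpha> i) + 1) / 2)"
    using assms by (intro powr_sum[symmetric]) auto
  ultimately show ?thesis unfolding exponent prod.distrib by simp
qed

lemma taylor_term_eq:
  fixes x y :: "real^'n" and \<alpha> :: "'n \<Rightarrow> nat"
  assumes t: "t > 0"
  shows "(\<Prod>i\<in>UNIV. (- (y $ i)) ^ \<alpha> i / fact (\<alpha> i) * kernel_deriv t (\<alpha> i) (x $ i))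
       = taylor_coeff x t \<alpha> * mi_pow y \<alpha>"
proof -
  have factor: "(- (y $ i)) ^ \<alpha> i / fact (\<alpha> i) * kernel_deriv t (\<alpha> i) (x $ i)
     = ((y $ i) ^ \<alpha> i / fact (\<alpha> i)) * (pi powr (-1/2) * (4 * t) powr (-(real (\<alpha> i) + 1) / 2)) *
       (exp (- ((x $ i)^2) / (4 * t)) * hermite (\<alpha> i) (x $ i / (2 * sqrt t)))" for i
  proof -
    have "(x $ i / (2 * sqrt t))^2 = (x $ i)^2 / (4 * t)"
      using t by (simp add: power_divide power_mult_distrib)
    moreover have "(- (y $ i)) ^ \<alpha> i = (-1) ^ \<alpha> i * (y $ i) ^ \<alpha> i" by (rule power_minus)
    moreover have "(-1::real) ^ \<alpha> i * (-1) ^ \<alpha> i = 1" by (simp flip: power_add)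
    ultimately show ?thesis
      unfolding kernel_deriv_def gauss_deriv_hermite by (simp add: field_simps)
  qed
  have norm: "(\<Prod>i\<in>UNIV. pi powr (-1/2) * (4 * t) powr (-(real (\<alpha> i) + 1) / 2))
      = pi powr (- (real CARD('n) / 2)) * (4 * t) powr (- ((real (mi_abs \<alpha>) + real CARD('n)) / 2))"
    using t by (intro prod_normalisations) auto
  have "(\<Prod>i\<in>UNIV. (- (y $ i)) ^ \<alpha> i / fact (\<alpha> i) * kernel_deriv t (\<alpha> i) (x $ i))
      = (\<Prod>i\<in>UNIV. (y $ i) ^ \<alpha> i / fact (\<alpha> i)) *
        (\<Prod>i\<in>UNIV. pi powr (-1/2) * (4 * t) powr (-(real (\<alpha> i) + 1) / 2)) *
        ((\<Prod>i\<in>UNIV. exp (- ((x $ i)^2) / (4 * t))) * (\<Prod>i\<in>UNIV. hermite (\<alpha> i) (x $ i / (2 * sqrt t))))"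
    unfolding factor prod.distrib ..
  also have "\<dots> = mi_pow y \<alpha> / mi_fact \<alpha> *
        (pi powr (- (real CARD('n) / 2)) * (4 * t) powr (- ((real (mi_abs \<alpha>) + real CARD('n)) / 2))) *
        (exp (- (norm x ^ 2) / (4 * t)) * (\<Prod>i\<in>UNIV. hermite (\<alpha> i) (x $ i / (2 * sqrt t))))"
    unfolding prod_dividef norm prod_gaussians mi_pow_def mi_fact_def ..
  finally show ?thesis unfolding taylor_coeff_def by (simp add: mult_ac)
qed

lemma remainder_term_eq:
  fixes y :: "real^'n" and \<alpha> :: "'n \<Rightarrow> nat"
  assumes t: "t > 0"
  shows "(\<Prod>i\<in>UNIV. \<bar>- (y $ i)\<bar> ^ \<alpha> i / fact (\<alpha> i) * kernel_deriv_bound t (\<alpha> i))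
       = remainder_coeff t \<alpha> * \<bar>mi_pow y \<alpha>\<bar>"
proof -
  have sqrt_fact: "sqrt (fact m) / fact m = (fact m :: real) powr (-1/2)" for m
  proof -
    have "(fact m :: real) powr (-1/2) = fact m powr (1/2 - 1)" by simp
    also have "\<dots> = fact m powr (1/2) / fact m powr 1" by (rule powr_diff)
    finally show ?thesis by (simp add: powr_half_sqrt)
  qed
  have factor: "\<bar>- (y $ i)\<bar> ^ \<alpha> i / fact (\<alpha> i) * kernel_deriv_bound t (\<alpha> i)
     = \<bar>y $ i\<bar> ^ \<alpha> i * ((2 * pi) powr (-1/2) * (2 * t) powr (-(real (\<alpha> i) + 1) / 2)) *
       ((real (\<alpha> i) + 1) powr (- (1 / 12)) * fact (\<alpha> i) powr (-1/2))" for i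
    unfolding kernel_deriv_bound_def sqrt_fact[symmetric] by (simp add: field_simps)
  have norm: "(\<Prod>i\<in>UNIV. (2 * pi) powr (-1/2) * (2 * t) powr (-(real (\<alpha> i) + 1) / 2))
      = (2 * pi) powr (- (real CARD('n) / 2)) * (2 * t) powr (- ((real (mi_abs \<alpha>) + real CARD('n)) / 2))"
    using t by (intro prod_normalisations) auto
  have facts: "(\<Prod>i\<in>UNIV. fact (\<alpha> i) powr (-1/2)) = 1 / sqrt (mi_fact \<alpha>)"
  proof -
    have "(\<Prod>i\<in>UNIV. fact (\<alpha> i) powr (-1/2)) = mi_fact \<alpha> powr (-1/2)"
      unfolding mi_fact_def by (simp add: prod_powr_distrib)
    also have "\<dots> = 1 / mi_fact \<alpha> powr (1/2)" by (simp add: powr_minus_divide)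
    also have "mi_fact \<alpha> powr (1/2) = sqrt (mi_fact \<alpha>)"
      unfolding mi_fact_def by (intro powr_half_sqrt prod_nonneg) auto
    finally show ?thesis .
  qed
  have "(\<Prod>i\<in>UNIV. \<bar>- (y $ i)\<bar> ^ \<alpha> i / fact (\<alpha> i) * kernel_deriv_bound t (\<alpha> i))
      = (\<Prod>i\<in>UNIV. \<bar>y $ i\<bar> ^ \<alpha> i) *
        (\<Prod>i\<in>UNIV. (2 * pi) powr (-1/2) * (2 * t) powr (-(real (\<alpha> i) + 1) / 2)) *
        ((\<Prod>i\<in>UNIV. (real (\<alpha> i) + 1) powr (- (1 / 12))) * (\<Prod>i\<in>UNIV. fact (\<alpha> i) powr (-1/2)))"
    unfolding factor prod.distrib ..
  also have "\<dots> = \<bar>mi_pow y \<alpha>\<bar> *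
        ((2 * pi) powr (- (real CARD('n) / 2)) * (2 * t) powr (- ((real (mi_abs \<alpha>) + real CARD('n)) / 2))) *
        ((\<Prod>i\<in>UNIV. real (\<alpha> i) + 1) powr (- (1 / 12)) * (1 / sqrt (mi_fact \<alpha>)))"
    unfolding norm facts mi_pow_def abs_prod power_abs prod_powr_distrib ..
  finally show ?thesis unfolding remainder_coeff_def by (simp add: mult_ac)
qed

lemma multi_indices_UNIV: "{\<alpha>::'n::finite \<Rightarrow> nat. P (mi_abs \<alpha>)} = multi_indices UNIV P"
  unfolding multi_indices_def mi_abs_def by auto

lemma heat_kernel_taylor_estimate:
  fixes x y :: "real^'n"
  assumes t: "t > 0"
  shows "\<bar>heat_kernel (x - y) t - (\<Sum>\<alpha>\<in>{\<alpha>. mi_abs \<alpha> \<le> k}. taylor_coeff x t \<alpha> * mi_pow y \<alpha>)\<bar>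
       \<le> (\<Sum>\<alpha>\<in>{\<alpha>. mi_abs \<alpha> = k + 1}. remainder_coeff t \<alpha> * \<bar>mi_pow y \<alpha>\<bar>)"
proof -
  have "\<bar>(\<Prod>i\<in>UNIV. kernel_deriv t 0 (x $ i + - (y $ i))) -
      (\<Sum>\<alpha>\<in>multi_indices UNIV (\<lambda>v. v \<le> k). \<Prod>i\<in>UNIV. (- (y $ i)) ^ \<alpha> i / fact (\<alpha> i) * kernel_deriv t (\<alpha> i) (x $ i))\<bar>
    \<le> (\<Sum>\<alpha>\<in>multi_indices UNIV (\<lambda>v. v = k + 1). \<Prod>i\<in>UNIV. \<bar>- (y $ i)\<bar> ^ \<alpha> i / fact (\<alpha> i) * kernel_deriv_bound t (\<alpha> i))"
    by (rule taylor_product_bound) (use kernel_deriv_has_deriv kernel_deriv_abs_le t in auto)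
  then show ?thesis
    unfolding taylor_term_eq[OF t] remainder_term_eq[OF t] multi_indices_UNIV[symmetric]
      heat_kernel_factorization[OF t]
    by simp
qed

lemma integral_expansion_bound:
  fixes P u :: "'a \<Rightarrow> real" and m :: "'b \<Rightarrow> 'a \<Rightarrow> real"
  assumes P: "integrable M (\<lambda>y. P y * u y)"
    and m: "\<And>\<alpha>. \<alpha> \<in> A \<union> B \<Longrightarrow> integrable M (\<lambda>y. m \<alpha> y * u y)"
    and pointwise: "\<And>y. \<bar>P y - (\<Sum>\<alpha>\<in>A. c \<alpha> * m \<alpha> y)\<bar> \<le> (\<Sum>\<alpha>\<in>B. b \<alpha> * \<bar>m \<alpha> y\<bar>)"
  shows "\<bar>(\<integral>y. P y * u y \<partial>M) - (\<Sum>\<alpha>\<in>A. c \<alpha> * (\<integral>y. m \<alpha> y * u y \<partial>M))\<bar>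
       \<le> (\<Sum>\<alpha>\<in>B. b \<alpha> * (\<integral>y. \<bar>m \<alpha> y * u y\<bar> \<partial>M))"
proof -
  define T where "T = (\<lambda>y. \<Sum>\<alpha>\<in>A. c \<alpha> * m \<alpha> y)"
  define E where "E = (\<lambda>y. \<Sum>\<alpha>\<in>B. b \<alpha> * \<bar>m \<alpha> y\<bar>)"
  have T_eq: "(\<lambda>y. T y * u y) = (\<lambda>y. \<Sum>\<alpha>\<in>A. c \<alpha> * (m \<alpha> y * u y))"
    unfolding T_def by (simp add: sum_distrib_right mult.assoc)
  have E_eq: "(\<lambda>y. E y * \<bar>u y\<bar>) = (\<lambda>y. \<Sum>\<alpha>\<in>B. b \<alpha> * \<bar>m \<alpha> y * u y\<bar>)"
    unfolding E_def by (simp add: sum_distrib_right mult.assoc abs_mult)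
  have T_int: "integrable M (\<lambda>y. T y * u y)" and E_int: "integrable M (\<lambda>y. E y * \<bar>u y\<bar>)"
    unfolding T_eq E_eq using m by auto
  have T_integral: "(\<integral>y. T y * u y \<partial>M) = (\<Sum>\<alpha>\<in>A. c \<alpha> * (\<integral>y. m \<alpha> y * u y \<partial>M))"
    unfolding T_eq using m by simp
  have "(\<integral>y. P y * u y \<partial>M) - (\<Sum>\<alpha>\<in>A. c \<alpha> * (\<integral>y. m \<alpha> y * u y \<partial>M))
      = (\<integral>y. (P y - T y) * u y \<partial>M)"
    using P T_int by (simp add: left_diff_distrib flip: T_integral)
  also have "\<bar>\<dots>\<bar> \<le> (\<integral>y. \<bar>(P y - T y) * u y\<bar> \<partial>M)" by (rule integral_abs_bound)
  also have "\<dots> \<le> (\<integral>y. E y * \<bar>u y\<bar> \<partial>M)"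
  proof (rule integral_mono[OF _ E_int])
    show "integrable M (\<lambda>y. \<bar>(P y - T y) * u y\<bar>)"
      using P T_int by (simp add: left_diff_distrib)
    show "\<bar>(P y - T y) * u y\<bar> \<le> E y * \<bar>u y\<bar>" for y
      unfolding abs_mult T_def E_def using pointwise by (intro mult_right_mono) auto
  qed
  also have "\<dots> = (\<Sum>\<alpha>\<in>B. b \<alpha> * (\<integral>y. \<bar>m \<alpha> y * u y\<bar> \<partial>M))"
    unfolding E_eq using m by simp
  finally show ?thesis .
qed

lemma continuous_imp_lebesgue_measurable:
  "continuous_on UNIV f \<Longrightarrow> (f :: 'a::euclidean_space \<Rightarrow> real) \<in> borel_measurable lebesgue"
  by (drule borel_measurable_continuous_onI) (simp add: measurable_completion)

lemma abs_mi_pow_le: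
  fixes y :: "real^'n"
  assumes "mi_abs \<alpha> \<le> k + 1"
  shows "\<bar>mi_pow y \<alpha>\<bar> \<le> 1 + norm y ^ (k + 1)"
proof -
  have "\<bar>mi_pow y \<alpha>\<bar> = (\<Prod>i\<in>UNIV. \<bar>y $ i\<bar> ^ \<alpha> i)" unfolding mi_pow_def abs_prod power_abs ..
  also have "\<dots> \<le> (\<Prod>i\<in>UNIV. norm y ^ \<alpha> i)"
    by (intro prod_mono conjI power_mono component_le_norm_cart) auto
  also have "\<dots> = norm y ^ mi_abs \<alpha>" unfolding mi_abs_def power_sum ..
  also have "\<dots> \<le> 1 + norm y ^ (k + 1)"
  proof (cases "norm y \<le> 1")
    case True
    then have "norm y ^ mi_abs \<alpha> \<le> 1" by (intro power_le_one) auto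
    then show ?thesis by (simp add: add_increasing2)
  next
    case False
    then have "norm y ^ mi_abs \<alpha> \<le> norm y ^ (k + 1)" using assms by (intro power_increasing) auto
    then show ?thesis by linarith
  qed
  finally show ?thesis .
qed

lemma integrable_moment:
  fixes u0 :: "real^'n \<Rightarrow> real"
  assumes meas: "u0 \<in> borel_measurable lebesgue"
    and L1: "integrable lebesgue (\<lambda>y. \<bar>u0 y\<bar> * (1 + norm y ^ (k + 1)))"
    and order: "mi_abs \<alpha> \<le> k + 1"
  shows "integrable lebesgue (\<lambda>y. mi_pow y \<alpha> * u0 y)"
proof (rule Bochner_Integration.integrable_bound[OF L1])
  have "continuous_on UNIV (\<lambda>y::real^'n. mi_pow y \<alpha>)"
    unfolding mi_pow_def by (intro continuous_intros)
  then show "(\<lambda>y. mi_pow y \<alpha> * u0 y) \<in> borel_measurable lebesgue"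
    using meas continuous_imp_lebesgue_measurable by measurable
  show "AE y in lebesgue. norm (mi_pow y \<alpha> * u0 y) \<le> norm (\<bar>u0 y\<bar> * (1 + norm y ^ (k + 1)))"
  proof (intro AE_I2)
    fix y
    have "\<bar>mi_pow y \<alpha> * u0 y\<bar> \<le> (1 + norm y ^ (k + 1)) * \<bar>u0 y\<bar>"
      unfolding abs_mult by (intro mult_right_mono abs_mi_pow_le order) auto
    then show "norm (mi_pow y \<alpha> * u0 y) \<le> norm (\<bar>u0 y\<bar> * (1 + norm y ^ (k + 1)))"
      by (simp add: abs_mult mult.commute)
  qed
qed

lemma integrable_heat_kernel_integrand:
  fixes u0 :: "real^'n \<Rightarrow> real"
  assumes meas: "u0 \<in> borel_measurable lebesgue"
    and L1: "integrable lebesgue (\<lambda>y. \<bar>u0 y\<bar> * (1 + norm y ^ (k + 1)))"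
    and t: "t > 0"
  shows "integrable lebesgue (\<lambda>y. heat_kernel (x - y) t * u0 y)"
proof (rule Bochner_Integration.integrable_bound[OF integrable_mult_right[OF L1]])
  have "continuous_on UNIV (\<lambda>y. heat_kernel (x - y) t)"
    unfolding heat_kernel_def using t by (intro continuous_intros) auto
  then show "(\<lambda>y. heat_kernel (x - y) t * u0 y) \<in> borel_measurable lebesgue"
    using meas continuous_imp_lebesgue_measurable by measurable
  have "\<bar>heat_kernel (x - y) t * u0 y\<bar> \<le> (4 * pi * t) powr (- (real CARD('n) / 2)) * (\<bar>u0 y\<bar> * (1 + norm y ^ (k + 1)))" for y
    unfolding abs_mult heat_kernel_def using t by (intro mult_mono) (auto simp: algebra_simps)
  then show "AE y in lebesgue. norm (heat_kernel (x - y) t * u0 y)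
      \<le> norm ((4 * pi * t) powr (- (real CARD('n) / 2)) * (\<bar>u0 y\<bar> * (1 + norm y ^ (k + 1))))"
    by (intro AE_I2) simp
qed

theorem mainTheorem2:
  fixes u0 :: "real^'n \<Rightarrow> real" and k :: nat and x :: "real^'n" and t :: real
  assumes meas: "u0 \<in> borel_measurable lebesgue"
    and L1: "integrable lebesgue (\<lambda>y. \<bar>u0 y\<bar> * (1 + norm y ^ (k + 1)))"
    and t: "t > 0"
  shows "\<bar>heat_solution u0 x t
      - pi powr (- (real CARD('n) / 2)) * exp (- (norm x ^ 2) / (4 * t)) *
        (\<Sum>\<alpha>\<in>{\<alpha>::'n \<Rightarrow> nat. mi_abs \<alpha> \<le> k}.
           (\<integral>y. mi_pow y \<alpha> * u0 y \<partial>lebesgue) / mi_fact \<alpha> *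
           (4 * t) powr (- ((real (mi_abs \<alpha>) + real CARD('n)) / 2)) *
           (\<Prod>i\<in>UNIV. hermite (\<alpha> i) (x $ i / (2 * sqrt t))))\<bar>
    \<le> (2 * pi) powr (- (real CARD('n) / 2)) * (2 * t) powr (- ((real k + real CARD('n) + 1) / 2)) *
        (\<Sum>\<alpha>\<in>{\<alpha>::'n \<Rightarrow> nat. mi_abs \<alpha> = k + 1}.
           (\<integral>y. \<bar>mi_pow y \<alpha> * u0 y\<bar> \<partial>lebesgue) / sqrt (mi_fact \<alpha>) *
           (\<Prod>i\<in>UNIV. real (\<alpha> i) + 1) powr (- (1 / 12)))"
proof -
  have "\<bar>heat_solution u0 x t - (\<Sum>\<alpha>\<in>{\<alpha>. mi_abs \<alpha> \<le> k}. taylor_coeff x t \<alpha> * (\<integral>y. mi_pow y \<alpha> * u0 y \<partial>lebesgue))\<bar>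
      \<le> (\<Sum>\<alpha>\<in>{\<alpha>. mi_abs \<alpha> = k + 1}. remainder_coeff t \<alpha> * (\<integral>y. \<bar>mi_pow y \<alpha> * u0 y\<bar> \<partial>lebesgue))"
    unfolding heat_solution_def
  proof (rule integral_expansion_bound)
    show "integrable lebesgue (\<lambda>y. heat_kernel (x - y) t * u0 y)"
      by (rule integrable_heat_kernel_integrand[OF meas L1 t])
    show "integrable lebesgue (\<lambda>y. mi_pow y \<alpha> * u0 y)"
      if "\<alpha> \<in> {\<alpha>. mi_abs \<alpha> \<le> k} \<union> {\<alpha>. mi_abs \<alpha> = k + 1}" for \<alpha>
      using that by (intro integrable_moment[OF meas L1]) auto
  qed (rule heat_kernel_taylor_estimate[OF t])
  moreover have "(\<Sum>\<alpha>\<in>{\<alpha>. mi_abs \<alpha> = k + 1}. remainder_coeff t \<alpha> * (\<integral>y. \<bar>mi_pow y \<alpha> * u0 y\<bar> \<partial>lebesgue))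
      = (2 * pi) powr (- (real CARD('n) / 2)) * (2 * t) powr (- ((real k + real CARD('n) + 1) / 2)) *
        (\<Sum>\<alpha>\<in>{\<alpha>::'n \<Rightarrow> nat. mi_abs \<alpha> = k + 1}.
           (\<integral>y. \<bar>mi_pow y \<alpha> * u0 y\<bar> \<partial>lebesgue) / sqrt (mi_fact \<alpha>) *
           (\<Prod>i\<in>UNIV. real (\<alpha> i) + 1) powr (- (1 / 12)))"
    unfolding sum_distrib_left remainder_coeff_def by (intro sum.cong) (auto simp: add_ac)
  ultimately show ?thesis
    unfolding taylor_coeff_def by (simp add: sum_distrib_left mult_ac)
qed

end
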